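(* Let $p,q$ be positive integers, $e\in\mathbb{R}^p$ the vector of all ones, and let $(z,w)\in\mathbb{R}^p\times\mathbb{R}^q$ satisfy $z^+\not\ge\|w\|e$ and $\langle z^-,e\rangle<\|w\|$. Assume further that $0<\alpha<1$ and $\langle e,|z|\rangle<\alpha(1+\alpha)^{-1}\|w\|$. For $\lambda\ge0$ let $N(\lambda):=\operatorname{diag}\big(-\operatorname{sgn}([(\lambda+1)z-\|w\|e]^-)\big)$, and given $\lambda_0>0$ define $\{\lambda_k\}$ by $N_k:=N(\lambda_k)$ and $$\big[-\|w\|+\langle e,N_kz\rangle\big]\lambda_{k+1}=-\langle e,N_k[z-\|w\|e]\rangle,\qquad k=0,1,\ldots.$$ Then for any $\lambda_0>0$ the sequence $\{\lambda_k\}$ is well defined and converges linearly to the unique solution $\lambda_*$ of $\lambda\|w\|=\langle e,[(\lambda+1)z-\|w\|e]^-\rangle$, namely $$|\lambda_*-\lambda_{k+1}|\le\alpha|\lambda_*-\lambda_k|,\qquad k=0,1,\ldots.$$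
   Context: For $\alpha\in\mathbb{R}$, $\alpha^+:=\max(\alpha,0)$ and $\alpha^-:=\max(-\alpha,0)$; for vectors, $z^+$, $z^-$, $|z|$ and $\operatorname{sgn}(z)$ are taken componentwise (with $\operatorname{sgn}(0)=0$), and $\operatorname{diag}(z)$ is the diagonal matrix with diagonal $z_1,\dots,z_p$. The order $\ge$ is componentwise; $z^+\not\ge\|w\|e$ means that $z^+\ge\|w\|e$ fails. *)

theory Defs
  imports "HOL-Analysis.Analysis"
begin

definition ones :: "real^'n" where
  "ones = (\<chi> i. 1)"

definition vpos :: "real^'n \<Rightarrow> real^'n" where
  "vpos z = (\<chi> i. max (z$i) 0)"

definition vneg :: "real^'n \<Rightarrow> real^'n" where
  "vneg z = (\<chi> i. max (- (z$i)) 0)"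

definition vabs :: "real^'n \<Rightarrow> real^'n" where
  "vabs z = (\<chi> i. \<bar>z$i\<bar>)"

definition vsgn :: "real^'n \<Rightarrow> real^'n" where
  "vsgn z = (\<chi> i. sgn (z$i))"

definition diagm :: "real^'n \<Rightarrow> real^'n^'n" where
  "diagm d = (\<chi> i j. if i = j then d$i else 0)"

definition Nmat :: "real^'n \<Rightarrow> real \<Rightarrow> real \<Rightarrow> real^'n^'n" where
  "Nmat z r lam = diagm (- vsgn (vneg ((lam + 1) *\<^sub>R z - r *\<^sub>R ones)))"

definition coef :: "real^'n \<Rightarrow> real \<Rightarrow> real \<Rightarrow> real" where
  "coef z r lam = - r + ones \<bullet> (Nmat z r lam *v z)"

definition rhs :: "real^'n \<Rightarrow> real \<Rightarrow> real \<Rightarrow> real" where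
  "rhs z r lam = - (ones \<bullet> (Nmat z r lam *v (z - r *\<^sub>R ones)))"

text \<open>The iteration; well-definedness is asserted separately (coef \<noteq> 0).\<close>
primrec lam_seq :: "real^'n \<Rightarrow> real \<Rightarrow> real \<Rightarrow> nat \<Rightarrow> real" where
  "lam_seq z r l0 0 = l0"
| "lam_seq z r l0 (Suc k) = rhs z r (lam_seq z r l0 k) / coef z r (lam_seq z r l0 k)"

end

theory Submission imports Defs begin

text \<open>
  Write \<open>r = \<parallel>w\<parallel>\<close> and \<open>s = \<langle>e,|z|\<rangle>\<close>. The right-hand side
  \<open>F(\<mu>) = \<Sum>\<^sub>i max (r - (\<mu>+1) z\<^sub>i) 0\<close> of the fixed-point equation is \<open>s\<close>-Lipschitz, so for
  \<open>s < r\<close> the equation \<open>\<mu> r = F(\<mu>)\<close> has exactly one solution \<open>\<lambda>\<^sub>*\<close>. The iteration is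
  Newton's method: \<open>\<lambda>\<^sub>k\<^sub>+\<^sub>1\<close> solves \<open>\<mu> r = H\<^sub>k(\<mu>)\<close>, where \<open>H\<^sub>k\<close> is the affine function agreeing
  with \<open>F\<close> on the indices active at \<open>\<lambda>\<^sub>k\<close>. The slope of \<open>H\<^sub>k\<close> is at most \<open>s\<close> in absolute value and
  \<open>0 \<le> F - H\<^sub>k \<le> s |\<mu> - \<lambda>\<^sub>k|\<close>, so subtracting the two equations gives
  \<open>(r - s) |\<lambda>\<^sub>k\<^sub>+\<^sub>1 - \<lambda>\<^sub>*| \<le> s |\<lambda>\<^sub>k - \<lambda>\<^sub>*|\<close>; the hypothesis \<open>s < \<alpha>/(1+\<alpha>) r\<close> says exactly
  \<open>s/(r - s) < \<alpha>\<close>.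
\<close>

definition hinge_sum :: "real^'n \<Rightarrow> real \<Rightarrow> real \<Rightarrow> real" where
  "hinge_sum z r \<mu> = (\<Sum>i\<in>UNIV. max (r - (\<mu> + 1) * z$i) 0)"

definition hinge_linearization :: "real^'n \<Rightarrow> real \<Rightarrow> real \<Rightarrow> real \<Rightarrow> real" where
  "hinge_linearization z r lam \<mu> =
    (\<Sum>i\<in>UNIV. if (lam + 1) * z$i < r then r - (\<mu> + 1) * z$i else 0)"

definition active_sum :: "real^'n \<Rightarrow> real \<Rightarrow> real \<Rightarrow> real" where
  "active_sum z r lam = (\<Sum>i\<in>UNIV. if (lam + 1) * z$i < r then z$i else 0)"

lemma Nmat_mult_vec_nth:
  "(Nmat z r lam *v v) $ i = (if (lam + 1) * z$i < r then - v$i else 0)"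
  unfolding Nmat_def diagm_def matrix_vector_mult_def vsgn_def vneg_def ones_def
  by (auto simp: if_distrib[where f="\<lambda>x. x * _"] sgn_if cong: if_cong)

lemma coef_eq_active_sum: "coef z r lam = - (r + active_sum z r lam)"
proof -
  have "ones \<bullet> (Nmat z r lam *v z) = - active_sum z r lam"
    unfolding inner_vec_def active_sum_def sum_negf[symmetric]
    by (rule sum.cong) (auto simp: Nmat_mult_vec_nth ones_def)
  then show ?thesis unfolding coef_def by simp
qed

lemma rhs_eq_hinge_linearization: "rhs z r lam = - hinge_linearization z r lam 0"
proof -
  have "ones \<bullet> (Nmat z r lam *v (z - r *\<^sub>R ones)) = hinge_linearization z r lam 0"
    unfolding inner_vec_def hinge_linearization_def
    by (rule sum.cong) (auto simp: Nmat_mult_vec_nth ones_def)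
  then show ?thesis unfolding rhs_def by simp
qed

lemma inner_ones_vneg_eq_hinge_sum:
  "ones \<bullet> vneg ((\<mu> + 1) *\<^sub>R z - r *\<^sub>R ones) = hinge_sum z r \<mu>"
  unfolding inner_vec_def vneg_def ones_def hinge_sum_def by simp

lemma inner_ones_vabs: "ones \<bullet> vabs z = (\<Sum>i\<in>UNIV. \<bar>z$i\<bar>)"
  unfolding inner_vec_def vabs_def ones_def by simp

lemma hinge_sum_nonneg: "0 \<le> hinge_sum z r \<mu>"
  unfolding hinge_sum_def by (rule sum_nonneg) simp

lemma hinge_sum_lipschitz:
  "\<bar>hinge_sum z r \<mu> - hinge_sum z r \<nu>\<bar> \<le> (\<Sum>i\<in>UNIV. \<bar>z$i\<bar>) * \<bar>\<mu> - \<nu>\<bar>"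
proof -
  have summand_le: "\<bar>max (r - (\<mu> + 1) * z$i) 0 - max (r - (\<nu> + 1) * z$i) 0\<bar>
    \<le> \<bar>z$i\<bar> * \<bar>\<mu> - \<nu>\<bar>" for i
  proof -
    have "\<bar>(r - (\<mu> + 1) * z$i) - (r - (\<nu> + 1) * z$i)\<bar> = \<bar>z$i\<bar> * \<bar>\<mu> - \<nu>\<bar>"
      by (simp add: algebra_simps abs_mult[symmetric])
    then show ?thesis by linarith
  qed
  have "\<bar>hinge_sum z r \<mu> - hinge_sum z r \<nu>\<bar>
      \<le> (\<Sum>i\<in>UNIV. \<bar>max (r - (\<mu> + 1) * z$i) 0 - max (r - (\<nu> + 1) * z$i) 0\<bar>)"
    unfolding hinge_sum_def sum_subtractf[symmetric] by (rule sum_abs)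
  also have "\<dots> \<le> (\<Sum>i\<in>UNIV. \<bar>z$i\<bar> * \<bar>\<mu> - \<nu>\<bar>)" by (rule sum_mono) (rule summand_le)
  finally show ?thesis by (simp add: sum_distrib_right)
qed

lemma hinge_linearization_error:
  "0 \<le> hinge_sum z r \<mu> - hinge_linearization z r lam \<mu>"
  "hinge_sum z r \<mu> - hinge_linearization z r lam \<mu> \<le> (\<Sum>i\<in>UNIV. \<bar>z$i\<bar>) * \<bar>\<mu> - lam\<bar>"
proof -
  define err where "err i = max (r - (\<mu> + 1) * z$i) 0
    - (if (lam + 1) * z$i < r then r - (\<mu> + 1) * z$i else 0)" for i
  have diff: "hinge_sum z r \<mu> - hinge_linearization z r lam \<mu> = (\<Sum>i\<in>UNIV. err i)"
    unfolding hinge_sum_def hinge_linearization_def err_def by (simp add: sum_subtractf)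
  have err_bounds: "0 \<le> err i \<and> err i \<le> \<bar>z$i\<bar> * \<bar>\<mu> - lam\<bar>" for i
  proof -
    have "\<bar>(r - (\<mu> + 1) * z$i) - (r - (lam + 1) * z$i)\<bar> = \<bar>z$i\<bar> * \<bar>\<mu> - lam\<bar>"
      by (simp add: algebra_simps abs_mult[symmetric])
    then show ?thesis unfolding err_def by auto
  qed
  show "0 \<le> hinge_sum z r \<mu> - hinge_linearization z r lam \<mu>"
    unfolding diff by (rule sum_nonneg) (use err_bounds in blast)
  have "(\<Sum>i\<in>UNIV. err i) \<le> (\<Sum>i\<in>UNIV. \<bar>z$i\<bar> * \<bar>\<mu> - lam\<bar>)"
    by (rule sum_mono) (use err_bounds in blast)
  then show "hinge_sum z r \<mu> - hinge_linearization z r lam \<mu> \<le> (\<Sum>i\<in>UNIV. \<bar>z$i\<bar>) * \<bar>\<mu> - lam\<bar>"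
    unfolding diff by (simp add: sum_distrib_right)
qed

lemma hinge_linearization_affine:
  "hinge_linearization z r lam \<mu> = hinge_linearization z r lam 0 - \<mu> * active_sum z r lam"
  unfolding hinge_linearization_def active_sum_def sum_distrib_left sum_subtractf[symmetric]
  by (rule sum.cong) (auto simp: algebra_simps)

lemma abs_active_sum_le: "\<bar>active_sum z r lam\<bar> \<le> (\<Sum>i\<in>UNIV. \<bar>z$i\<bar>)"
proof -
  have "\<bar>active_sum z r lam\<bar> \<le> (\<Sum>i\<in>UNIV. \<bar>if (lam + 1) * z$i < r then z$i else 0\<bar>)"
    unfolding active_sum_def by (rule sum_abs)
  also have "\<dots> \<le> (\<Sum>i\<in>UNIV. \<bar>z$i\<bar>)" by (rule sum_mono) auto
  finally show ?thesis .
qed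

lemma hinge_linearization_at_zero_nonneg:
  assumes "(\<Sum>i\<in>UNIV. \<bar>z$i\<bar>) < r"
  shows "0 \<le> hinge_linearization z r lam 0"
proof -
  have "z$i < r" for i
    using member_le_sum[of i UNIV "\<lambda>i. \<bar>z$i\<bar>"] assms by auto
  then show ?thesis
    unfolding hinge_linearization_def by (intro sum_nonneg) (auto simp: less_imp_le)
qed

lemma hinge_fixed_point_exists:
  assumes "(\<Sum>i\<in>UNIV. \<bar>z$i\<bar>) < r"
  obtains \<mu> where "\<mu> * r = hinge_sum z r \<mu>"
proof -
  let ?s = "\<Sum>i\<in>UNIV. \<bar>z$i\<bar>"
  define g where "g \<mu> = \<mu> * r - hinge_sum z r \<mu>" for \<mu>
  define M where "M = hinge_sum z r 0 / (r - ?s)"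
  have M_nonneg: "0 \<le> M"
    unfolding M_def using hinge_sum_nonneg[of z r 0] assms by simp
  have "hinge_sum z r M \<le> hinge_sum z r 0 + ?s * M"
    using hinge_sum_lipschitz[of z r M 0] M_nonneg by simp
  moreover have "M * (r - ?s) = hinge_sum z r 0" unfolding M_def using assms by simp
  ultimately have "0 \<le> g M" unfolding g_def by (simp add: algebra_simps)
  moreover have "g 0 \<le> 0" unfolding g_def using hinge_sum_nonneg[of z r 0] by simp
  moreover have "isCont g x" for x unfolding g_def hinge_sum_def by (intro continuous_intros)
  ultimately obtain \<mu> where "g \<mu> = 0" using IVT[of g 0 0 M] M_nonneg by blast
  then show ?thesis using that unfolding g_def by simp
qed

lemma hinge_fixed_point_unique:
  assumes "(\<Sum>i\<in>UNIV. \<bar>z$i\<bar>) < r"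
    and "\<mu> * r = hinge_sum z r \<mu>" and "\<nu> * r = hinge_sum z r \<nu>"
  shows "\<mu> = \<nu>"
proof -
  let ?s = "\<Sum>i\<in>UNIV. \<bar>z$i\<bar>"
  have "0 \<le> ?s" by (simp add: sum_nonneg)
  with assms(1) have "r > 0" by linarith
  then have "\<bar>\<mu> - \<nu>\<bar> * r = \<bar>hinge_sum z r \<mu> - hinge_sum z r \<nu>\<bar>"
    using assms(2,3) by (metis abs_mult abs_of_pos left_diff_distrib)
  also have "\<dots> \<le> ?s * \<bar>\<mu> - \<nu>\<bar>" by (rule hinge_sum_lipschitz)
  finally have "\<bar>\<mu> - \<nu>\<bar> * (r - ?s) \<le> 0" by (simp add: algebra_simps)
  then show ?thesis using assms(1) by (simp add: mult_le_0_iff)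
qed

lemma coef_neq_zero:
  assumes "(\<Sum>i\<in>UNIV. \<bar>z$i\<bar>) < r"
  shows "coef z r lam \<noteq> 0"
  using abs_active_sum_le[of z r lam] assms unfolding coef_eq_active_sum by linarith

lemma newton_step_eq:
  "rhs z r lam / coef z r lam = hinge_linearization z r lam 0 / (r + active_sum z r lam)"
  unfolding coef_eq_active_sum rhs_eq_hinge_linearization by (rule minus_divide_divide)

lemma newton_step_nonneg:
  assumes "(\<Sum>i\<in>UNIV. \<bar>z$i\<bar>) < r"
  shows "0 \<le> rhs z r lam / coef z r lam"
proof -
  have "0 < r + active_sum z r lam" using abs_active_sum_le[of z r lam] assms by linarith
  then show ?thesis
    using hinge_linearization_at_zero_nonneg[OF assms, of lam]
    unfolding newton_step_eq by simp
qed

lemma newton_step_contraction: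
  assumes "(\<Sum>i\<in>UNIV. \<bar>z$i\<bar>) < r" and fixed: "\<mu> * r = hinge_sum z r \<mu>"
  shows "(r - (\<Sum>i\<in>UNIV. \<bar>z$i\<bar>)) * \<bar>rhs z r lam / coef z r lam - \<mu>\<bar>
    \<le> (\<Sum>i\<in>UNIV. \<bar>z$i\<bar>) * \<bar>\<mu> - lam\<bar>"
proof -
  let ?s = "\<Sum>i\<in>UNIV. \<bar>z$i\<bar>"
  define lam' where "lam' = rhs z r lam / coef z r lam"
  define D where "D = r + active_sum z r lam"
  have D_ge: "r - ?s \<le> D" unfolding D_def using abs_active_sum_le[of z r lam] by linarith
  with assms(1) have D_pos: "0 < D" by linarith
  have "lam' * D = hinge_linearization z r lam 0"
    unfolding lam'_def newton_step_eq D_def using D_pos[unfolded D_def] by simp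
  then have "D * (lam' - \<mu>) = hinge_linearization z r lam \<mu> - hinge_sum z r \<mu>"
    using fixed hinge_linearization_affine[of z r lam \<mu>] unfolding D_def
    by (simp add: algebra_simps)
  then have "D * \<bar>lam' - \<mu>\<bar> = \<bar>hinge_sum z r \<mu> - hinge_linearization z r lam \<mu>\<bar>"
    using D_pos by (metis abs_minus_commute abs_mult abs_of_pos)
  also have "\<dots> = hinge_sum z r \<mu> - hinge_linearization z r lam \<mu>"
    using hinge_linearization_error(1) by (rule abs_of_nonneg)
  also have "\<dots> \<le> ?s * \<bar>\<mu> - lam\<bar>" by (rule hinge_linearization_error(2))
  finally have "D * \<bar>lam' - \<mu>\<bar> \<le> ?s * \<bar>\<mu> - lam\<bar>" .
  moreover have "(r - ?s) * \<bar>lam' - \<mu>\<bar> \<le> D * \<bar>lam' - \<mu>\<bar>"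
    using D_ge by (simp add: mult_right_mono)
  ultimately show ?thesis unfolding lam'_def by linarith
qed

lemma LIMSEQ_of_contraction_rate:
  fixes x :: "nat \<Rightarrow> real"
  assumes "0 \<le> \<alpha>" "\<alpha> < 1" and rate: "\<And>k. \<bar>l - x (Suc k)\<bar> \<le> \<alpha> * \<bar>l - x k\<bar>"
  shows "x \<longlonglongrightarrow> l"
proof -
  have geometric: "\<bar>l - x k\<bar> \<le> \<alpha> ^ k * \<bar>l - x 0\<bar>" for k
  proof (induction k)
    case (Suc k)
    have "\<bar>l - x (Suc k)\<bar> \<le> \<alpha> * \<bar>l - x k\<bar>" by (rule rate)
    also have "\<dots> \<le> \<alpha> * (\<alpha> ^ k * \<bar>l - x 0\<bar>)" using Suc assms(1) by (rule mult_left_mono)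
    finally show ?case by simp
  qed simp
  have "(\<lambda>k. \<alpha> ^ k * \<bar>l - x 0\<bar>) \<longlonglongrightarrow> 0"
    using LIMSEQ_power_zero[of \<alpha>] assms(1,2) by (auto intro: tendsto_mult_left_zero)
  then have "(\<lambda>k. x k - l) \<longlonglongrightarrow> 0"
    by (rule Lim_null_comparison[rotated]) (use geometric in \<open>auto simp: abs_minus_commute\<close>)
  then show ?thesis by (simp add: LIM_zero_cancel)
qed

lemma bound_imp_contraction_factor:
  fixes s r \<alpha> :: real
  assumes "0 \<le> s" "0 < \<alpha>" "s < \<alpha> / (1 + \<alpha>) * r"
  shows "s < r" "s \<le> \<alpha> * (r - s)"
proof -
  from assms(2,3) have strict: "s < \<alpha> * (r - s)" by (simp add: field_simps)
  then show "s \<le> \<alpha> * (r - s)" by simp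
  from strict assms(1) have "0 < \<alpha> * (r - s)" by linarith
  with assms(2) show "s < r" by (simp add: zero_less_mult_iff)
qed

theorem proposition4:
  fixes z :: "real^'p" and w :: "real^'q" and \<alpha> l0 :: real
  assumes "\<not> (norm w *\<^sub>R ones \<le> vpos z)"
    and "vneg z \<bullet> ones < norm w"
    and "0 < \<alpha>" and "\<alpha> < 1"
    and "ones \<bullet> vabs z < \<alpha> / (1 + \<alpha>) * norm w"
    and "0 < l0"
  shows "(\<forall>k. 0 \<le> lam_seq z (norm w) l0 k \<and> coef z (norm w) (lam_seq z (norm w) l0 k) \<noteq> 0)
    \<and> (\<exists>ls. ls * norm w = ones \<bullet> vneg ((ls + 1) *\<^sub>R z - norm w *\<^sub>R ones)
         \<and> (\<forall>\<mu>. \<mu> * norm w = ones \<bullet> vneg ((\<mu> + 1) *\<^sub>R z - norm w *\<^sub>R ones) \<longrightarrow> \<mu> = ls)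
         \<and> lam_seq z (norm w) l0 \<longlonglongrightarrow> ls
         \<and> (\<forall>k. \<bar>ls - lam_seq z (norm w) l0 (Suc k)\<bar> \<le> \<alpha> * \<bar>ls - lam_seq z (norm w) l0 k\<bar>))"
proof -
  define r where "r = norm w"
  define s where "s = (\<Sum>i\<in>UNIV. \<bar>z$i\<bar>)"
  define L where "L = lam_seq z r l0"
  have "0 \<le> s" unfolding s_def by (simp add: sum_nonneg)
  then have sr: "s < r" and s_le: "s \<le> \<alpha> * (r - s)"
    using bound_imp_contraction_factor assms(3,5) unfolding r_def s_def inner_ones_vabs by blast+
  have L_Suc: "L (Suc k) = rhs z r (L k) / coef z r (L k)" for k
    unfolding L_def by simp
  have well_defined: "0 \<le> L k \<and> coef z r (L k) \<noteq> 0" for k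
  proof -
    have "0 \<le> L k"
      using assms(6) newton_step_nonneg[of z r] sr
      by (cases k) (auto simp: L_Suc s_def L_def)
    then show ?thesis using coef_neq_zero[of z r] sr by (simp add: s_def)
  qed
  obtain ls where ls: "ls * r = hinge_sum z r ls"
    using hinge_fixed_point_exists sr unfolding s_def by blast
  have rate: "\<bar>ls - L (Suc k)\<bar> \<le> \<alpha> * \<bar>ls - L k\<bar>" for k
  proof -
    have "(r - s) * \<bar>ls - L (Suc k)\<bar> \<le> s * \<bar>ls - L k\<bar>"
      using newton_step_contraction[of z r ls "L k"] sr ls
      unfolding L_Suc s_def by (simp add: abs_minus_commute)
    also have "\<dots> \<le> \<alpha> * (r - s) * \<bar>ls - L k\<bar>"
      using s_le by (rule mult_right_mono) simp
    finally show ?thesis using sr by (simp add: mult.commute mult.left_commute)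
  qed
  have "L \<longlonglongrightarrow> ls"
    using LIMSEQ_of_contraction_rate[of \<alpha> ls L] rate assms(3,4) by simp
  moreover have "\<mu> = ls" if "\<mu> * r = hinge_sum z r \<mu>" for \<mu>
    using hinge_fixed_point_unique[of z r \<mu> ls] sr that ls by (simp add: s_def)
  ultimately show ?thesis
    using well_defined ls rate unfolding L_def r_def inner_ones_vneg_eq_hinge_sum by blast
qed

end
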